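(* Let $F$ be a field of characteristic not $2$, let $a\in F^*$ be a non-square, and let $L=F(\sqrt{a})$. Then $L^{(2)}\subset F^{(3)}$.
   Context: All fields are taken inside a fixed quadratic closure $F_q$ of $F$. For a field $K$ of characteristic not $2$, define $K^{(1)}=K$ and, for $n\ge 1$, $K^{(n+1)}$ is the compositum of all quadratic extensions of $K^{(n)}$ which are Galois over $K$. *)

theory Defs
  imports "HOL-Computational_Algebra.Polynomial"
begin

text \<open>All fields are subfields of an ambient field of type 'a (playing the role of
the fixed quadratic closure F_q).\<close>

definition is_subfield :: "'a::field set \<Rightarrow> bool" where
  "is_subfield K \<longleftrightarrow> 0 \<in> K \<and> 1 \<in> K \<and>
     (\<forall>x\<in>K. \<forall>y\<in>K. x + y \<in> K \<and> x * y \<in> K) \<and>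
     (\<forall>x\<in>K. - x \<in> K \<and> inverse x \<in> K)"

definition gen_field :: "'a::field set \<Rightarrow> 'a set" where
  "gen_field S = \<Inter>{M. is_subfield M \<and> S \<subseteq> M}"

definition coeffs_in :: "'a::field poly \<Rightarrow> 'a set \<Rightarrow> bool" where
  "coeffs_in p K \<longleftrightarrow> (\<forall>i. coeff p i \<in> K)"

definition irreducible_over :: "'a::field set \<Rightarrow> 'a poly \<Rightarrow> bool" where
  "irreducible_over K p \<longleftrightarrow> coeffs_in p K \<and> degree p \<ge> 1 \<and>
     \<not> (\<exists>q r. coeffs_in q K \<and> coeffs_in r K \<and> degree q \<ge> 1 \<and> degree r \<ge> 1 \<and> p = q * r)"

definition splits_distinct_in :: "'a::field set \<Rightarrow> 'a poly \<Rightarrow> bool" where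
  "splits_distinct_in M p \<longleftrightarrow>
     (\<exists>rs. set rs \<subseteq> M \<and> distinct rs \<and> p = smult (lead_coeff p) (\<Prod>r\<leftarrow>rs. [:- r, 1:]))"

text \<open>M is Galois over K: M is an (algebraic) extension of K such that the minimal
polynomial over K of every element of M splits into distinct linear factors in M
(normal and separable).\<close>
definition galois_over :: "'a::field set \<Rightarrow> 'a set \<Rightarrow> bool" where
  "galois_over K M \<longleftrightarrow> is_subfield K \<and> is_subfield M \<and> K \<subseteq> M \<and>
     (\<forall>x\<in>M. \<exists>p. irreducible_over K p \<and> poly p x = 0 \<and> splits_distinct_in M p)"

definition quadratic_ext :: "'a::field set \<Rightarrow> 'a set \<Rightarrow> bool" where
  "quadratic_ext K M \<longleftrightarrow> is_subfield K \<and> is_subfield M \<and> K \<subseteq> M \<and>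
     (\<exists>b1\<in>M. \<exists>b2\<in>M. \<forall>m\<in>M. \<exists>!(k1, k2). k1 \<in> K \<and> k2 \<in> K \<and> m = k1 * b1 + k2 * b2)"

text \<open>tower K n is K^(n+1) of the paper: tower K 0 = K and tower K (n+1) is the
compositum of all quadratic extensions of tower K n which are Galois over K.\<close>
primrec tower :: "'a::field set \<Rightarrow> nat \<Rightarrow> 'a set" where
  "tower K 0 = K"
| "tower K (Suc n) =
     gen_field (tower K n \<union> \<Union>{E. quadratic_ext (tower K n) E \<and> galois_over K E})"

definition Kup :: "'a::field set \<Rightarrow> nat \<Rightarrow> 'a set" where
  "Kup K n = tower K (n - 1)"

definition quadratically_closed :: "'a::field set \<Rightarrow> bool" where
  "quadratically_closed M \<longleftrightarrow> (\<forall>x\<in>M. \<exists>y\<in>M. y * y = x)"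

definition is_quadratic_closure_of :: "'a::field set \<Rightarrow> bool" where
  "is_quadratic_closure_of F \<longleftrightarrow> is_subfield F \<and> quadratically_closed (UNIV :: 'a set) \<and>
     (\<forall>M. is_subfield M \<and> F \<subseteq> M \<and> quadratically_closed M \<longrightarrow> M = UNIV)"

end

theory Submission
  imports Defs
begin

(*
  Write L = F(s). Every quadratic extension of L is generated by a square root rb of some
  beta = b0 + b1 s in L, so it suffices to put rb into F^(3). Let w be a square root of the
  conjugate beta' = b0 - b1 s, with the sign chosen so that u = rb + w is nonzero. Then
  (rb w)^2 = beta beta' lies in F, so rb w and u^2 = beta + beta' + 2 rb w lie in F^(2), and
  rb = (u + (beta - beta') / u) / 2 lies in E = F^(2)(u). Either u lies in F^(2), or E is a
  quadratic extension of F^(2) that is Galois over F; in both cases E is contained in F^(3).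

  E is Galois over F because each of its elements x lies in a tower of square roots over F
  whose generators have all their F-conjugates in E (they are roots of X^2 - c with c in F, or
  of (X^2 - beta) (X^2 - beta')). The polynomial whose simple roots are the images of x under
  all F-embeddings of such a tower into the quadratically closed ambient field then works:
  its coefficients are fixed by every F-embedding of a larger tower, hence lie in F, and it
  is irreducible since an F-factor vanishing at x vanishes at all images of x.
*)

lemma subfield_0: "is_subfield K \<Longrightarrow> 0 \<in> K"
  unfolding is_subfield_def by blast

lemma subfield_1: "is_subfield K \<Longrightarrow> 1 \<in> K"
  unfolding is_subfield_def by blast

lemma subfield_add: "is_subfield K \<Longrightarrow> x \<in> K \<Longrightarrow> y \<in> K \<Longrightarrow> x + y \<in> K"
  unfolding is_subfield_def by blast

lemma subfield_mult: "is_subfield K \<Longrightarrow> x \<in> K \<Longrightarrow> y \<in> K \<Longrightarrow> x * y \<in> K"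
  unfolding is_subfield_def by blast

lemma subfield_uminus: "is_subfield K \<Longrightarrow> x \<in> K \<Longrightarrow> - x \<in> K"
  unfolding is_subfield_def by blast

lemma subfield_inverse: "is_subfield K \<Longrightarrow> x \<in> K \<Longrightarrow> inverse x \<in> K"
  unfolding is_subfield_def by blast

lemma subfield_diff: "is_subfield K \<Longrightarrow> x \<in> K \<Longrightarrow> y \<in> K \<Longrightarrow> x - y \<in> K"
  by (metis diff_conv_add_uminus subfield_add subfield_uminus)

lemma subfield_divide: "is_subfield K \<Longrightarrow> x \<in> K \<Longrightarrow> y \<in> K \<Longrightarrow> x / y \<in> K"
  by (metis divide_inverse subfield_inverse subfield_mult)

lemma subfield_2: "is_subfield K \<Longrightarrow> 2 \<in> K"
  by (metis one_add_one subfield_1 subfield_add)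

lemmas subfield_closed = subfield_0 subfield_1 subfield_2 subfield_add subfield_mult
  subfield_uminus subfield_inverse subfield_diff subfield_divide

lemma subfield_sum: "is_subfield K \<Longrightarrow> (\<And>i. i \<in> S \<Longrightarrow> f i \<in> K) \<Longrightarrow> sum f S \<in> K"
  by (induction S rule: infinite_finite_induct) (auto simp: subfield_closed)

lemma gen_field_least: "is_subfield M \<Longrightarrow> S \<subseteq> M \<Longrightarrow> gen_field S \<subseteq> M"
  unfolding gen_field_def by blast

lemma gen_field_upper: "S \<subseteq> gen_field S"
  unfolding gen_field_def by blast

lemma is_subfield_gen_field: "is_subfield (gen_field S)"
  unfolding is_subfield_def gen_field_def by (auto simp: subfield_closed)

lemma coeffs_in_pCons [simp]: "coeffs_in (pCons a p) K \<longleftrightarrow> a \<in> K \<and> coeffs_in p K"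
  unfolding coeffs_in_def by (metis coeff_pCons_0 coeff_pCons_Suc not0_implies_Suc)

lemma coeffs_in_0: "is_subfield K \<Longrightarrow> coeffs_in 0 K"
  unfolding coeffs_in_def by (simp add: subfield_0)

lemma coeffs_in_mono: "coeffs_in p K \<Longrightarrow> K \<subseteq> M \<Longrightarrow> coeffs_in p M"
  unfolding coeffs_in_def by auto

lemma coeffs_in_mult: "is_subfield K \<Longrightarrow> coeffs_in p K \<Longrightarrow> coeffs_in q K \<Longrightarrow> coeffs_in (p * q) K"
  unfolding coeffs_in_def coeff_mult by (auto intro!: subfield_sum subfield_mult)

lemma coeffs_in_prod_linear:
  assumes "is_subfield K" "A \<subseteq> K"
  shows "coeffs_in (\<Prod>y\<in>A. [:-y, 1:]) K"
  using assms(2)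
proof (induction A rule: infinite_finite_induct)
  case (insert y A)
  have "coeffs_in [:-y, 1:] K" using assms(1) insert.prems
    by (simp add: coeffs_in_0 subfield_closed)
  then show ?case using insert assms(1) by (simp add: coeffs_in_mult del: mult_pCons_left)
qed (use assms(1) in \<open>auto simp: coeffs_in_def coeff_1 subfield_closed\<close>)

lemma poly_mem_subfield: "is_subfield K \<Longrightarrow> coeffs_in p K \<Longrightarrow> y \<in> K \<Longrightarrow> poly p y \<in> K"
  by (induction p rule: pCons_induct) (auto simp: subfield_closed)

section \<open>Adjoining a square root\<close>

definition adjoin :: "'a::field set \<Rightarrow> 'a \<Rightarrow> 'a set" where
  "adjoin K r = {a + b * r | a b. a \<in> K \<and> b \<in> K}"

lemma adjoinI: "a \<in> K \<Longrightarrow> b \<in> K \<Longrightarrow> a + b * r \<in> adjoin K r"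
  unfolding adjoin_def by blast

lemma adjoinE:
  assumes "x \<in> adjoin K r"
  obtains a b where "a \<in> K" "b \<in> K" "x = a + b * r"
  using assms unfolding adjoin_def by blast

lemma subset_adjoin: "is_subfield K \<Longrightarrow> K \<subseteq> adjoin K r"
  using adjoinI[of _ K 0 r] by (auto simp: subfield_0)

lemma mem_adjoin_self: "is_subfield K \<Longrightarrow> r \<in> adjoin K r"
  using adjoinI[of 0 K 1 r] by (simp add: subfield_0 subfield_1)

lemma adjoin_least: "is_subfield M \<Longrightarrow> K \<subseteq> M \<Longrightarrow> r \<in> M \<Longrightarrow> adjoin K r \<subseteq> M"
  by (auto elim!: adjoinE simp: subfield_closed subset_iff)

lemma adjoin_eq_self: "is_subfield K \<Longrightarrow> r \<in> K \<Longrightarrow> adjoin K r = K"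
  by (simp add: adjoin_least subset_adjoin subset_antisym)

lemma adjoin_coords_unique:
  assumes K: "is_subfield K" and r: "r \<notin> K" and "a \<in> K" "b \<in> K" "c \<in> K" "d \<in> K"
    and eq: "a + b * r = c + d * r"
  shows "a = c \<and> b = d"
proof (cases "b = d")
  case False
  have "(b - d) * r = c - a" using eq by (simp add: algebra_simps)
  then have "r = (c - a) / (b - d)" using False by (simp add: field_simps)
  then show ?thesis using r assms by (simp add: subfield_closed)
qed (use eq in simp)

lemma is_subfield_adjoin:
  assumes K: "is_subfield K" and rr: "r * r \<in> K"
  shows "is_subfield (adjoin K r)"
proof (cases "r \<in> K")
  case True
  then show ?thesis using K adjoin_eq_self[OF K True] by simp
next
  case rK: False
  show ?thesis unfolding is_subfield_def
  proof (intro conjI ballI)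
    show "0 \<in> adjoin K r" "1 \<in> adjoin K r"
      using subset_adjoin[OF K] subfield_0[OF K] subfield_1[OF K] by auto
    fix x y assume "x \<in> adjoin K r" "y \<in> adjoin K r"
    then obtain a b c d where ab: "a \<in> K" "b \<in> K" "x = a + b * r"
      and cd: "c \<in> K" "d \<in> K" "y = c + d * r" by (meson adjoinE)
    have sum: "x + y = (a + c) + (b + d) * r" using ab cd by (simp add: algebra_simps)
    show "x + y \<in> adjoin K r" unfolding sum
      by (rule adjoinI) (use K ab cd in \<open>simp_all add: subfield_closed\<close>)
    have "x * y = (a * c + b * d * (r * r)) + (a * d + b * c) * r"
      using ab cd by (simp add: algebra_simps)
    then show "x * y \<in> adjoin K r" using K ab cd rr by (simp add: adjoinI subfield_closed)
    have neg: "- x = - a + (- b) * r" using ab by simp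
    show "- x \<in> adjoin K r" unfolding neg
      by (rule adjoinI) (use K ab in \<open>simp_all add: subfield_closed\<close>)
    show "inverse x \<in> adjoin K r"
    proof (cases "x = 0")
      case True
      then show ?thesis using \<open>0 \<in> adjoin K r\<close> by simp
    next
      case False
      define N where "N = a * a - b * b * (r * r)"
      have conj: "x * (a - b * r) = N" using ab unfolding N_def by (simp add: algebra_simps)
      have "a - b * r \<noteq> 0"
      proof
        assume "a - b * r = 0"
        then have "a + (- b) * r = 0 + 0 * r" by simp
        then have "a = 0 \<and> - b = 0"
          by (rule adjoin_coords_unique[OF K rK ab(1) subfield_uminus[OF K ab(2)]
                subfield_0[OF K] subfield_0[OF K]])
        then show False using False ab by simp
      qed
      then have N: "N \<noteq> 0" unfolding conj[symmetric] using False by simp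
      have "x * ((a - b * r) / N) = 1" using conj N by simp
      then have "inverse x = (a - b * r) / N" by (rule inverse_unique)
      also have "\<dots> = a / N + (- b / N) * r" by (simp add: diff_divide_distrib)
      finally have inv: "inverse x = a / N + (- b / N) * r" .
      have "N \<in> K" unfolding N_def using K ab rr by (simp add: subfield_closed)
      show ?thesis unfolding inv
        by (rule adjoinI) (use K ab \<open>N \<in> K\<close> in \<open>simp_all add: subfield_closed\<close>)
    qed
  qed
qed

lemma quadratic_ext_adjoin:
  assumes K: "is_subfield K" and rr: "r * r \<in> K" and rK: "r \<notin> K"
  shows "quadratic_ext K (adjoin K r)"
proof -
  have "\<exists>!(k1, k2). k1 \<in> K \<and> k2 \<in> K \<and> x = k1 * 1 + k2 * r" if "x \<in> adjoin K r" for x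
  proof -
    obtain a b where ab: "a \<in> K" "b \<in> K" "x = a + b * r" using \<open>x \<in> adjoin K r\<close> by (rule adjoinE)
    show ?thesis
      by (rule ex1I[of _ "(a, b)"]) (use ab adjoin_coords_unique[OF K rK] in auto)
  qed
  then show ?thesis unfolding quadratic_ext_def
    using K is_subfield_adjoin[OF K rr] subset_adjoin[OF K] mem_adjoin_self[OF K]
      subfield_1[of "adjoin K r"] by blast
qed

lemma quadratic_ext_monic_relation:
  assumes Q: "quadratic_ext K E" and e: "e \<in> E"
  shows "\<exists>B\<in>K. \<exists>C\<in>K. e * e + B * e + C = 0"
proof -
  have K: "is_subfield K" and E: "is_subfield E" using Q unfolding quadratic_ext_def by auto
  obtain b1 b2 where span: "\<And>m. m \<in> E \<Longrightarrow> \<exists>k1\<in>K. \<exists>k2\<in>K. m = k1 * b1 + k2 * b2"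
    using Q unfolding quadratic_ext_def by (fastforce dest!: ex1_implies_ex)
  obtain x1 x2 where x: "x1 \<in> K" "x2 \<in> K" "1 = x1 * b1 + x2 * b2"
    using span[OF subfield_1[OF E]] by blast
  obtain y1 y2 where y: "y1 \<in> K" "y2 \<in> K" "e = y1 * b1 + y2 * b2"
    using span[OF e] by blast
  obtain z1 z2 where z: "z1 \<in> K" "z2 \<in> K" "e * e = z1 * b1 + z2 * b2"
    using span[OF subfield_mult[OF E e e]] by blast
  show ?thesis
  proof (cases "x1 * y2 - x2 * y1 = 0")
    case True
    then have cross: "x1 * y2 = x2 * y1" by simp
    have "x1 * e = x1 * y1 * b1 + (x1 * y2) * b2" unfolding y(3) by (simp add: algebra_simps)
    also have "\<dots> = y1 * (x1 * b1 + x2 * b2)" unfolding cross by (simp add: algebra_simps)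
    finally have x1e: "x1 * e = y1" using x(3)[symmetric] by simp
    have "x2 * e = (x1 * y2) * b1 + x2 * y2 * b2" unfolding y(3) cross by (simp add: algebra_simps)
    also have "\<dots> = y2 * (x1 * b1 + x2 * b2)" by (simp add: algebra_simps)
    finally have x2e: "x2 * e = y2" using x(3)[symmetric] by simp
    have "e \<in> K"
    proof (cases "x1 = 0")
      case False
      then have "e = y1 / x1" using x1e by (simp add: field_simps)
      then show ?thesis using K x y by (simp add: subfield_closed)
    next
      case True
      then have "x2 \<noteq> 0" using x(3) by auto
      then have "e = y2 / x2" using x2e by (simp add: field_simps)
      then show ?thesis using K x y by (simp add: subfield_closed)
    qed
    then show ?thesis using K by (intro bexI[of _ "- 2 * e"] bexI[of _ "e * e"])
        (auto simp: algebra_simps subfield_closed)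
  next
    case False
    \<comment> \<open>The \<open>2 \<times> 2\<close> minors of the coordinate vectors of \<open>1, e, e * e\<close> give a linear relation.\<close>
    define l0 l1 l2 where "l0 = y1 * z2 - y2 * z1" and "l1 = z1 * x2 - z2 * x1"
      and "l2 = x1 * y2 - x2 * y1"
    have "l0 * 1 + l1 * e + l2 * (e * e) =
        l0 * (x1 * b1 + x2 * b2) + l1 * (y1 * b1 + y2 * b2) + l2 * (z1 * b1 + z2 * b2)"
      by (simp only: x(3)[symmetric] y(3)[symmetric] z(3)[symmetric])
    also have "\<dots> = 0" unfolding l0_def l1_def l2_def by (simp add: algebra_simps)
    finally have "l0 + l1 * e + l2 * (e * e) = 0" by simp
    moreover have l2: "l2 \<noteq> 0" using False unfolding l2_def .
    then have "l2 * (e * e + (l1 / l2) * e + l0 / l2) = l0 + l1 * e + l2 * (e * e)"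
      by (simp add: field_simps)
    ultimately have "e * e + (l1 / l2) * e + l0 / l2 = 0" using l2 by simp
    moreover have "l1 / l2 \<in> K" "l0 / l2 \<in> K"
      unfolding l0_def l1_def l2_def using K x y z by (simp_all add: subfield_closed)
    ultimately show ?thesis by blast
  qed
qed

lemma quadratic_ext_sqrt_coords:
  fixes K E :: "'a::field set"
  assumes Q: "quadratic_ext K E" and two: "(2::'a) \<noteq> 0" and e: "e \<in> E"
  shows "\<exists>p\<in>K. \<exists>q\<in>K. \<exists>r. r * r \<in> K \<and> e = p + q * r"
proof -
  have K: "is_subfield K" using Q unfolding quadratic_ext_def by auto
  obtain B C where BC: "B \<in> K" "C \<in> K" "e * e + B * e + C = 0"
    using quadratic_ext_monic_relation[OF Q e] by blast
  define r where "r = 2 * e + B"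
  have "r * r = B * B - 4 * C + 4 * (e * e + B * e + C)" unfolding r_def
    by (simp add: algebra_simps)
  then have rr: "r * r = B * B - 2 * (2 * C)" using BC(3) by simp
  have "B * B - 2 * (2 * C) \<in> K" by (intro subfield_diff subfield_mult subfield_2 K BC)
  then have "r * r \<in> K" unfolding rr .
  moreover have "e = - B / 2 + (1 / 2) * r" unfolding r_def using two by (simp add: distrib_left)
  moreover have "- B / 2 \<in> K" "1 / 2 \<in> K" using K BC by (simp_all add: subfield_closed)
  ultimately show ?thesis by blast
qed

section \<open>Towers of square roots\<close>

fun sqrt_tower :: "'a::field set \<Rightarrow> 'a list \<Rightarrow> 'a set" where
  "sqrt_tower F [] = F"
| "sqrt_tower F (r # rs) = adjoin (sqrt_tower F rs) r"

fun is_sqrt_tower :: "'a::field set \<Rightarrow> 'a list \<Rightarrow> bool" where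
  "is_sqrt_tower F [] = True"
| "is_sqrt_tower F (r # rs) \<longleftrightarrow> is_sqrt_tower F rs \<and> r * r \<in> sqrt_tower F rs"

lemma sqrt_tower_least: "is_subfield M \<Longrightarrow> F \<subseteq> M \<Longrightarrow> set rs \<subseteq> M \<Longrightarrow> sqrt_tower F rs \<subseteq> M"
  by (induction rs) (simp_all add: adjoin_least)

context
  fixes F :: "'a::field set"
  assumes F: "is_subfield F"
begin

lemma is_subfield_sqrt_tower: "is_sqrt_tower F rs \<Longrightarrow> is_subfield (sqrt_tower F rs)"
  by (induction rs) (simp_all add: F is_subfield_adjoin)

lemma sqrt_tower_subset_Cons: "is_sqrt_tower F (r # rs) \<Longrightarrow> sqrt_tower F rs \<subseteq> sqrt_tower F (r # rs)"
  by (simp add: is_subfield_sqrt_tower subset_adjoin)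

lemma base_subset_sqrt_tower: "is_sqrt_tower F rs \<Longrightarrow> F \<subseteq> sqrt_tower F rs"
proof (induction rs)
  case (Cons r rs)
  then show ?case using sqrt_tower_subset_Cons[OF Cons.prems] by simp
qed simp

lemma set_subset_sqrt_tower: "is_sqrt_tower F rs \<Longrightarrow> set rs \<subseteq> sqrt_tower F rs"
proof (induction rs)
  case (Cons r rs)
  have "r \<in> sqrt_tower F (r # rs)"
    using Cons.prems by (simp add: is_subfield_sqrt_tower mem_adjoin_self)
  then show ?case using Cons sqrt_tower_subset_Cons[OF Cons.prems] by simp
qed simp

lemma sqrt_tower_mono:
  "is_sqrt_tower F rs' \<Longrightarrow> set rs \<subseteq> set rs' \<Longrightarrow> sqrt_tower F rs \<subseteq> sqrt_tower F rs'"
  by (meson base_subset_sqrt_tower is_subfield_sqrt_tower set_subset_sqrt_tower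
      sqrt_tower_least order_trans)

lemma is_sqrt_tower_append:
  "is_sqrt_tower F xs \<Longrightarrow> is_sqrt_tower F ys \<Longrightarrow> is_sqrt_tower F (xs @ ys)"
proof (induction xs)
  case (Cons x xs)
  then have tower: "is_sqrt_tower F (xs @ ys)" by simp
  then have "sqrt_tower F xs \<subseteq> sqrt_tower F (xs @ ys)" by (rule sqrt_tower_mono) auto
  then show ?case using tower Cons.prems by auto
qed simp

lemma is_sqrt_tower_concat:
  "(\<And>rs. rs \<in> set rss \<Longrightarrow> is_sqrt_tower F rs) \<Longrightarrow> is_sqrt_tower F (concat rss)"
  by (induction rss) (simp_all add: is_sqrt_tower_append)

lemma is_sqrt_tower_if_squares_in_base:
  "(\<And>r. r \<in> set rs \<Longrightarrow> r * r \<in> F) \<Longrightarrow> is_sqrt_tower F rs"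
  by (induction rs) (auto dest!: base_subset_sqrt_tower)

end

section \<open>Embeddings over a subfield\<close>

definition emb_over :: "'a::field set \<Rightarrow> 'a set \<Rightarrow> ('a \<Rightarrow> 'a) \<Rightarrow> bool" where
  "emb_over F K t \<longleftrightarrow> (\<forall>x\<in>F. t x = x) \<and>
     (\<forall>x\<in>K. \<forall>y\<in>K. t (x + y) = t x + t y \<and> t (x * y) = t x * t y)"

lemma emb_over_id: "emb_over F K id"
  unfolding emb_over_def by simp

lemma emb_over_mono: "emb_over F K t \<Longrightarrow> K' \<subseteq> K \<Longrightarrow> emb_over F K' t"
  unfolding emb_over_def by blast

lemma emb_over_comp:
  "emb_over F K t \<Longrightarrow> t ` K \<subseteq> K' \<Longrightarrow> emb_over F K' p \<Longrightarrow> F \<subseteq> K \<Longrightarrow> emb_over F K (p \<circ> t)"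
  unfolding emb_over_def by (auto simp: subset_iff)

lemma emb_over_fixes: "emb_over F K t \<Longrightarrow> x \<in> F \<Longrightarrow> t x = x"
  unfolding emb_over_def by blast

lemma emb_over_add: "emb_over F K t \<Longrightarrow> x \<in> K \<Longrightarrow> y \<in> K \<Longrightarrow> t (x + y) = t x + t y"
  unfolding emb_over_def by blast

lemma emb_over_mult: "emb_over F K t \<Longrightarrow> x \<in> K \<Longrightarrow> y \<in> K \<Longrightarrow> t (x * y) = t x * t y"
  unfolding emb_over_def by blast

context
  fixes F K :: "'a::field set" and t :: "'a \<Rightarrow> 'a"
  assumes F: "is_subfield F" and K: "is_subfield K" and FK: "F \<subseteq> K" and t: "emb_over F K t"
begin

lemma emb_over_0: "t 0 = 0"
  using emb_over_fixes[OF t subfield_0[OF F]] .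

lemma emb_over_1: "t 1 = 1"
  using emb_over_fixes[OF t subfield_1[OF F]] .

lemma emb_over_uminus: "x \<in> K \<Longrightarrow> t (- x) = - t x"
  using emb_over_add[OF t, of x "- x"] emb_over_0 by (simp add: K subfield_uminus minus_unique)

lemma emb_over_diff: "x \<in> K \<Longrightarrow> y \<in> K \<Longrightarrow> t (x - y) = t x - t y"
  using emb_over_add[OF t, of x "- y"] emb_over_uminus[of y] by (simp add: K subfield_uminus)

lemma emb_over_nonzero: "x \<in> K \<Longrightarrow> x \<noteq> 0 \<Longrightarrow> t x \<noteq> 0"
  using emb_over_mult[OF t, of x "inverse x"] emb_over_1 by (auto simp: K subfield_inverse)

lemma emb_over_inj_on: "inj_on t K"
  by (rule inj_onI) (metis K emb_over_diff emb_over_nonzero right_minus_eq subfield_diff)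

lemma emb_over_sum: "(\<And>i. i \<in> S \<Longrightarrow> f i \<in> K) \<Longrightarrow> t (sum f S) = (\<Sum>i\<in>S. t (f i))"
  by (induction S rule: infinite_finite_induct)
    (simp_all add: emb_over_0 emb_over_add[OF t] K subfield_sum)

lemma emb_over_poly: "coeffs_in p F \<Longrightarrow> y \<in> K \<Longrightarrow> t (poly p y) = poly p (t y)"
proof (induction p rule: pCons_induct)
  case (pCons a p)
  have "poly p y \<in> K"
    using poly_mem_subfield[OF K coeffs_in_mono[OF _ FK]] pCons.prems by simp
  then show ?case
    using pCons FK emb_over_fixes[OF t]
    by (auto simp: emb_over_add[OF t] emb_over_mult[OF t] K subfield_mult)
qed (simp add: emb_over_0)

lemma map_poly_emb_over_mult:
  assumes p: "coeffs_in p K" and q: "coeffs_in q K"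
  shows "map_poly t (p * q) = map_poly t p * map_poly t q"
proof (rule poly_eqI)
  fix n
  have "coeff (map_poly t (p * q)) n = t (\<Sum>i\<le>n. coeff p i * coeff q (n - i))"
    by (simp add: coeff_map_poly emb_over_0 coeff_mult)
  also have "\<dots> = (\<Sum>i\<le>n. t (coeff p i) * t (coeff q (n - i)))"
    using p q unfolding coeffs_in_def
    by (simp add: emb_over_sum emb_over_mult[OF t] K subfield_mult)
  also have "\<dots> = coeff (map_poly t p * map_poly t q) n"
    by (simp add: coeff_map_poly emb_over_0 coeff_mult)
  finally show "coeff (map_poly t (p * q)) n = coeff (map_poly t p * map_poly t q) n" .
qed

lemma map_poly_emb_over_prod_linear:
  assumes "A \<subseteq> K"
  shows "map_poly t (\<Prod>y\<in>A. [:-y, 1:]) = (\<Prod>y\<in>t ` A. [:-y, 1:])"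
proof -
  have "map_poly t (\<Prod>y\<in>A. [:-y, 1:]) = (\<Prod>y\<in>A. [:- t y, 1:])"
    using assms
  proof (induction A rule: infinite_finite_induct)
    case (insert y A)
    have "coeffs_in [:-y, 1:] K" using insert.prems by (simp add: K coeffs_in_0 subfield_closed)
    moreover have "coeffs_in (\<Prod>y\<in>A. [:-y, 1:]) K" using insert.prems
      by (simp add: K coeffs_in_prod_linear)
    ultimately show ?case using insert
      by (simp add: map_poly_emb_over_mult map_poly_pCons emb_over_0 emb_over_1 emb_over_uminus
          del: mult_pCons_left)
  qed (simp_all add: emb_over_1)
  also have "\<dots> = (\<Prod>y\<in>t ` A. [:-y, 1:])"
    by (simp add: prod.reindex[OF inj_on_subset[OF emb_over_inj_on assms]])
  finally show ?thesis .
qed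

end

lemma emb_over_sqrt_tower_Cons:
  assumes F: "is_subfield F" and tower: "is_sqrt_tower F (r # rs)"
    and t: "emb_over F (sqrt_tower F (r # rs)) t"
    and a: "a \<in> sqrt_tower F rs" and b: "b \<in> sqrt_tower F rs"
  shows "t (a + b * r) = t a + t b * t r"
proof -
  have K': "is_subfield (sqrt_tower F (r # rs))" by (rule is_subfield_sqrt_tower[OF F tower])
  have "a \<in> sqrt_tower F (r # rs)" "b \<in> sqrt_tower F (r # rs)"
    using a b sqrt_tower_subset_Cons[OF F tower] by auto
  moreover have "r \<in> sqrt_tower F (r # rs)" using set_subset_sqrt_tower[OF F tower] by simp
  ultimately show ?thesis using K'
    by (simp add: emb_over_add[OF t] emb_over_mult[OF t] subfield_mult)
qed

lemma emb_over_extend: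
  assumes F: "is_subfield F" and tower: "is_sqrt_tower F (r # rs)" and r: "r \<notin> sqrt_tower F rs"
    and t: "emb_over F (sqrt_tower F rs) t" and r': "r' * r' = t (r * r)"
  shows "\<exists>t'. emb_over F (sqrt_tower F (r # rs)) t' \<and> t' r = r' \<and> (\<forall>x\<in>sqrt_tower F rs. t' x = t x)"
proof -
  let ?K = "sqrt_tower F rs"
  have K: "is_subfield ?K" and FK: "F \<subseteq> ?K" and rr: "r * r \<in> ?K"
    using tower by (simp_all add: F is_subfield_sqrt_tower base_subset_sqrt_tower)
  note t_add = emb_over_add[OF t] and t_mult = emb_over_mult[OF t]
    and t_0 = emb_over_0[OF F K FK t] and t_1 = emb_over_1[OF F K FK t]
  define coords where "coords y = (SOME (a, b). a \<in> ?K \<and> b \<in> ?K \<and> y = a + b * r)" for y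
  define t' where "t' y = (case coords y of (a, b) \<Rightarrow> t a + t b * r')" for y
  have t': "t' (a + b * r) = t a + t b * r'" if "a \<in> ?K" "b \<in> ?K" for a b
  proof -
    have "coords (a + b * r) = (a, b)"
      unfolding coords_def
      by (rule some_equality) (use that adjoin_coords_unique[OF K r] in auto)
    then show ?thesis unfolding t'_def by simp
  qed
  have "emb_over F (sqrt_tower F (r # rs)) t'"
    unfolding emb_over_def
  proof (intro conjI ballI)
    fix x assume "x \<in> F"
    then show "t' x = x" using t'[of x 0] FK K emb_over_fixes[OF t] t_0 by (auto simp: subfield_0)
  next
    fix x y assume "x \<in> sqrt_tower F (r # rs)" "y \<in> sqrt_tower F (r # rs)"
    then obtain a b c d where ab: "a \<in> ?K" "b \<in> ?K" "x = a + b * r"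
      and cd: "c \<in> ?K" "d \<in> ?K" "y = c + d * r" by (auto elim!: adjoinE)
    have sum: "x + y = (a + c) + (b + d) * r" using ab cd by (simp add: algebra_simps)
    have "t' (x + y) = t (a + c) + t (b + d) * r'"
      unfolding sum by (rule t') (use K ab cd in \<open>simp_all add: subfield_add\<close>)
    also have "\<dots> = t' x + t' y" using t' ab cd by (simp add: t_add algebra_simps)
    finally show "t' (x + y) = t' x + t' y" .
    have prod: "x * y = (a * c + b * d * (r * r)) + (a * d + b * c) * r"
      using ab cd by (simp add: algebra_simps)
    have "t' (x * y) = t (a * c + b * d * (r * r)) + t (a * d + b * c) * r'"
      unfolding prod by (rule t') (use K ab cd rr in \<open>simp_all add: subfield_closed\<close>)
    also have "\<dots> = (t a * t c + t b * t d * (r' * r')) + (t a * t d + t b * t c) * r'"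
      using K ab cd rr r' by (simp add: t_add t_mult subfield_closed)
    also have "\<dots> = t' x * t' y" using t' ab cd by (simp add: algebra_simps)
    finally show "t' (x * y) = t' x * t' y" .
  qed
  moreover have "t' r = r'" using t'[of 0 1] K t_0 t_1 by (simp add: subfield_0 subfield_1)
  moreover have "t' x = t x" if "x \<in> ?K" for x using t'[of x 0] that K t_0 by (simp add: subfield_0)
  ultimately show ?thesis by blast
qed

lemma emb_over_image_sqrt_tower:
  assumes F: "is_subfield F"
  shows "is_sqrt_tower F rs \<Longrightarrow> emb_over F (sqrt_tower F rs) t \<Longrightarrow>
    is_sqrt_tower F (map t rs) \<and> t ` sqrt_tower F rs \<subseteq> sqrt_tower F (map t rs)"
proof (induction rs)
  case Nil
  then show ?case by (auto simp: emb_over_fixes)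
next
  case (Cons r rs)
  let ?K = "sqrt_tower F rs" and ?M = "sqrt_tower F (map t rs)"
  note tower = Cons.prems(1) and t = Cons.prems(2)
  have IH: "is_sqrt_tower F (map t rs)" "t ` ?K \<subseteq> ?M"
    using Cons.IH tower emb_over_mono[OF t sqrt_tower_subset_Cons[OF F tower]] by auto
  have "r \<in> sqrt_tower F (r # rs)" using set_subset_sqrt_tower[OF F tower] by simp
  then have "t r * t r = t (r * r)" by (simp add: emb_over_mult[OF t])
  then have "t r * t r \<in> ?M" using IH(2) tower by auto
  moreover have "t ` sqrt_tower F (r # rs) \<subseteq> adjoin ?M (t r)"
  proof
    fix z assume "z \<in> t ` sqrt_tower F (r # rs)"
    then obtain a b where ab: "a \<in> ?K" "b \<in> ?K" "z = t (a + b * r)" by (auto elim!: adjoinE)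
    then have "z = t a + t b * t r" using emb_over_sqrt_tower_Cons[OF F tower t] by simp
    then show "z \<in> adjoin ?M (t r)" using IH(2) ab by (auto intro!: adjoinI)
  qed
  ultimately show ?case using IH(1) by simp
qed

text \<open>A fixed element has zero \<open>r\<close>-coordinate because of the conjugation \<open>r \<mapsto> - r\<close>
  (this needs \<open>2 \<noteq> 0\<close>), and its other coordinate is fixed by every embedding of the smaller
  tower, since each of these extends (this needs quadratic closedness).\<close>
lemma mem_base_if_fixed:
  fixes F :: "'a::field set"
  assumes F: "is_subfield F" and two: "(2::'a) \<noteq> 0" and qc: "\<forall>x::'a. \<exists>y. y * y = x"
  shows "is_sqrt_tower F rs \<Longrightarrow> x \<in> sqrt_tower F rs \<Longrightarrow>
    (\<And>t. emb_over F (sqrt_tower F rs) t \<Longrightarrow> t x = x) \<Longrightarrow> x \<in> F"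
proof (induction rs arbitrary: x)
  case (Cons r rs)
  let ?K = "sqrt_tower F rs"
  note tower = Cons.prems(1) and fixed = Cons.prems(3)
  have tower': "is_sqrt_tower F rs" and K: "is_subfield ?K"
    using tower by (simp_all add: F is_subfield_sqrt_tower)
  show ?case
  proof (cases "r \<in> ?K")
    case True
    then have "sqrt_tower F (r # rs) = ?K" using adjoin_eq_self[OF K] by simp
    then show ?thesis using Cons.IH[OF tower'] Cons.prems by simp
  next
    case rK: False
    obtain a b where ab: "a \<in> ?K" "b \<in> ?K" "x = a + b * r"
      using Cons.prems(2) by (auto elim: adjoinE)
    obtain \<sigma> where \<sigma>: "emb_over F (sqrt_tower F (r # rs)) \<sigma>" "\<sigma> r = - r" "\<forall>y\<in>?K. \<sigma> y = y"
      using emb_over_extend[OF F tower rK emb_over_id, of "- r"] by auto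
    have "a - b * r = \<sigma> x" using emb_over_sqrt_tower_Cons[OF F tower \<sigma>(1) ab(1,2)] \<sigma> ab by simp
    also have "\<dots> = a + b * r" using fixed[OF \<sigma>(1)] ab by simp
    finally have "2 * (b * r) = 0" by (simp add: algebra_simps)
    moreover have "r \<noteq> 0" using rK subfield_0[OF K] by auto
    ultimately have b: "b = 0" using two by simp
    have "t a = a" if t: "emb_over F ?K t" for t
    proof -
      obtain r' where r': "r' * r' = t (r * r)" using qc by blast
      obtain t' where t': "emb_over F (sqrt_tower F (r # rs)) t'" "\<forall>y\<in>?K. t' y = t y"
        using emb_over_extend[OF F tower rK t r'] by blast
      show "t a = a" using fixed[OF t'(1)] t'(2) ab b by simp
    qed
    then have "a \<in> F" using Cons.IH[OF tower' ab(1)] by blast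
    then show ?thesis using ab b by simp
  qed
qed simp

section \<open>Conjugates and the orbit polynomial\<close>

definition conjugates :: "'a::field set \<Rightarrow> 'a list \<Rightarrow> 'a \<Rightarrow> 'a set" where
  "conjugates F rs x = {t x | t. emb_over F (sqrt_tower F rs) t}"

definition orbit_poly :: "'a::field set \<Rightarrow> 'a list \<Rightarrow> 'a \<Rightarrow> 'a poly" where
  "orbit_poly F rs x = (\<Prod>y\<in>conjugates F rs x. [:-y, 1:])"

lemma conjugatesI: "emb_over F (sqrt_tower F rs) t \<Longrightarrow> t x \<in> conjugates F rs x"
  unfolding conjugates_def by blast

lemma self_mem_conjugates: "x \<in> conjugates F rs x"
  using conjugatesI[OF emb_over_id] by simp

lemma finite_sqrts: "finite S \<Longrightarrow> finite {y::'a::field. y * y \<in> S}"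
proof -
  assume S: "finite S"
  have "{y. y * y \<in> S} \<subseteq> (\<Union>c\<in>S. {y. poly [:-c, 0, 1:] y = 0})" by auto
  moreover have "finite {y. poly [:-c, 0, 1:] y = (0::'a)}" for c by (rule poly_roots_finite) simp
  ultimately show ?thesis using S by (meson finite_UN_I finite_subset)
qed

lemma finite_conjugates:
  assumes F: "is_subfield F"
  shows "is_sqrt_tower F rs \<Longrightarrow> x \<in> sqrt_tower F rs \<Longrightarrow> finite (conjugates F rs x)"
proof (induction rs arbitrary: x)
  case Nil
  then have "conjugates F [] x \<subseteq> {x}" by (auto simp: conjugates_def emb_over_fixes)
  then show ?case by (rule finite_subset) simp
next
  case (Cons r rs)
  let ?K = "sqrt_tower F rs" and ?C = "conjugates F rs"
  note tower = Cons.prems(1)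
  have tower': "is_sqrt_tower F rs" and rr: "r * r \<in> ?K" using tower by simp_all
  obtain a b where ab: "a \<in> ?K" "b \<in> ?K" "x = a + b * r" using Cons.prems(2) by (auto elim: adjoinE)
  have "conjugates F (r # rs) x \<subseteq>
      (\<lambda>(a', b', c). a' + b' * c) ` (?C a \<times> ?C b \<times> {c. c * c \<in> ?C (r * r)})"
  proof
    fix z assume "z \<in> conjugates F (r # rs) x"
    then obtain t where t: "emb_over F (sqrt_tower F (r # rs)) t" "z = t x"
      unfolding conjugates_def by blast
    have tK: "emb_over F ?K t" using emb_over_mono[OF t(1) sqrt_tower_subset_Cons[OF F tower]] .
    have "z = t a + t b * t r" using emb_over_sqrt_tower_Cons[OF F tower t(1) ab(1,2)] t(2) ab(3)
      by simp
    moreover have "t r * t r = t (r * r)"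
      using set_subset_sqrt_tower[OF F tower] by (simp add: emb_over_mult[OF t(1)])
    ultimately show "z \<in> (\<lambda>(a', b', c). a' + b' * c) ` (?C a \<times> ?C b \<times> {c. c * c \<in> ?C (r * r)})"
      using conjugatesI[OF tK] by (intro image_eqI[of _ _ "(t a, t b, t r)"]) auto
  qed
  moreover have "finite (?C a \<times> ?C b \<times> {c. c * c \<in> ?C (r * r)})"
    using Cons.IH[OF tower'] ab rr by (simp add: finite_sqrts)
  ultimately show ?case by (meson finite_imageI finite_subset)
qed

lemma conjugates_subset:
  assumes F: "is_subfield F" and tower: "is_sqrt_tower F rs" and x: "x \<in> sqrt_tower F rs"
    and M: "is_subfield M" "F \<subseteq> M"
    and gens: "\<And>t. emb_over F (sqrt_tower F rs) t \<Longrightarrow> t ` set rs \<subseteq> M"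
  shows "conjugates F rs x \<subseteq> M"
proof
  fix z assume "z \<in> conjugates F rs x"
  then obtain t where t: "emb_over F (sqrt_tower F rs) t" "z = t x" unfolding conjugates_def
    by blast
  have "sqrt_tower F (map t rs) \<subseteq> M" using sqrt_tower_least[OF M] gens[OF t(1)] by simp
  then show "z \<in> M" using emb_over_image_sqrt_tower[OF F tower t(1)] x t(2) by blast
qed

lemma common_sqrt_tower:
  assumes F: "is_subfield F" and tower: "is_sqrt_tower F rs"
  obtains rs' where "is_sqrt_tower F rs'"
    and "\<And>t. emb_over F (sqrt_tower F rs) t \<Longrightarrow> t ` sqrt_tower F rs \<subseteq> sqrt_tower F rs'"
proof -
  let ?imgs = "{map t rs | t. emb_over F (sqrt_tower F rs) t}"
  let ?C = "\<Union>r\<in>set rs. conjugates F rs r"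
  have "?imgs \<subseteq> {xs. set xs \<subseteq> ?C \<and> length xs = length rs}"
  proof
    fix xs assume "xs \<in> ?imgs"
    then obtain t where t: "emb_over F (sqrt_tower F rs) t" "xs = map t rs" by blast
    then show "xs \<in> {xs. set xs \<subseteq> ?C \<and> length xs = length rs}" using conjugatesI[OF t(1)] by auto
  qed
  moreover have "finite ?C"
    using finite_conjugates[OF F tower] set_subset_sqrt_tower[OF F tower] by auto
  ultimately have "finite ?imgs" by (rule finite_subset[OF _ finite_lists_length_eq])
  from finite_list[OF this] obtain rss where rss: "set rss = ?imgs" ..
  have tower': "is_sqrt_tower F (concat rss)"
  proof (rule is_sqrt_tower_concat[OF F])
    fix xs assume "xs \<in> set rss"
    then have "xs \<in> ?imgs" unfolding rss .
    then obtain t where "emb_over F (sqrt_tower F rs) t" "xs = map t rs" by blast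
    then show "is_sqrt_tower F xs" using emb_over_image_sqrt_tower[OF F tower] by blast
  qed
  have into: "t ` sqrt_tower F rs \<subseteq> sqrt_tower F (concat rss)"
    if t: "emb_over F (sqrt_tower F rs) t" for t
  proof -
    have "map t rs \<in> set rss" unfolding rss using t by blast
    then have "sqrt_tower F (map t rs) \<subseteq> sqrt_tower F (concat rss)"
      by (intro sqrt_tower_mono[OF F tower']) auto
    then show ?thesis using emb_over_image_sqrt_tower[OF F tower t] by blast
  qed
  show ?thesis by (rule that[OF tower' into])
qed

context
  fixes F :: "'a::field set" and rs :: "'a list" and x :: 'a
  assumes F: "is_subfield F" and tower: "is_sqrt_tower F rs" and x: "x \<in> sqrt_tower F rs"
begin

lemma poly_orbit_poly_self: "poly (orbit_poly F rs x) x = 0"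
  unfolding orbit_poly_def
  using finite_conjugates[OF F tower x] self_mem_conjugates by (simp add: poly_prod prod_zero_iff)

lemma degree_orbit_poly: "degree (orbit_poly F rs x) = card (conjugates F rs x)"
  unfolding orbit_poly_def by (simp add: degree_prod_sum_eq)

lemma orbit_poly_splits:
  assumes "conjugates F rs x \<subseteq> M"
  shows "splits_distinct_in M (orbit_poly F rs x)"
proof -
  obtain l where l: "set l = conjugates F rs x" "distinct l"
    using finite_distinct_list[OF finite_conjugates[OF F tower x]] by blast
  have "orbit_poly F rs x = (\<Prod>y\<leftarrow>l. [:-y, 1:])"
    unfolding orbit_poly_def using l by (metis prod.distinct_set_conv_list)
  moreover have "lead_coeff (orbit_poly F rs x) = 1"
    unfolding orbit_poly_def by (simp add: lead_coeff_prod)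
  ultimately show ?thesis unfolding splits_distinct_in_def using l assms by auto
qed

lemma card_conjugates_le_degree:
  assumes q: "coeffs_in q F" "q \<noteq> 0" "poly q x = 0"
  shows "card (conjugates F rs x) \<le> degree q"
proof -
  have "conjugates F rs x \<subseteq> {z. poly q z = 0}"
  proof
    fix z assume "z \<in> conjugates F rs x"
    then obtain t where t: "emb_over F (sqrt_tower F rs) t" "z = t x" unfolding conjugates_def
      by blast
    have K: "is_subfield (sqrt_tower F rs)" and FK: "F \<subseteq> sqrt_tower F rs"
      using tower by (simp_all add: F is_subfield_sqrt_tower base_subset_sqrt_tower)
    have "poly q z = t (poly q x)" using emb_over_poly[OF F K FK t(1) q(1) x] t(2) by simp
    then show "z \<in> {z. poly q z = 0}" using q(3) emb_over_0[OF F K FK t(1)] by simp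
  qed
  then have "card (conjugates F rs x) \<le> card {z. poly q z = 0}"
    using poly_roots_finite[OF q(2)] by (rule card_mono[rotated])
  also have "\<dots> \<le> degree q" by (rule card_poly_roots_bound[OF q(2)])
  finally show ?thesis .
qed

text \<open>Any factor over \<open>F\<close> vanishing at \<open>x\<close> vanishes on all conjugates, so it has full degree.\<close>
lemma irreducible_orbit_poly:
  assumes "coeffs_in (orbit_poly F rs x) F"
  shows "irreducible_over F (orbit_poly F rs x)"
  unfolding irreducible_over_def
proof (intro conjI notI)
  let ?P = "orbit_poly F rs x"
  show "coeffs_in ?P F" by (rule assms)
  have "card (conjugates F rs x) \<ge> 1"
    using finite_conjugates[OF F tower x] self_mem_conjugates
    by (metis card_0_eq empty_iff less_one not_le)
  then show deg: "1 \<le> degree ?P" by (simp add: degree_orbit_poly)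
  assume "\<exists>q r. coeffs_in q F \<and> coeffs_in r F \<and> 1 \<le> degree q \<and> 1 \<le> degree r \<and> ?P = q * r"
  then obtain q r where qr: "coeffs_in q F" "coeffs_in r F" "1 \<le> degree q" "1 \<le> degree r"
    "?P = q * r" by blast
  then have "q \<noteq> 0" "r \<noteq> 0" by auto
  then have "degree ?P = degree q + degree r" by (simp add: qr(5) degree_mult_eq)
  moreover have "poly q x = 0 \<or> poly r x = 0" using poly_orbit_poly_self qr(5) by simp
  then have "card (conjugates F rs x) \<le> degree q \<or> card (conjugates F rs x) \<le> degree r"
    using card_conjugates_le_degree qr(1,2) \<open>q \<noteq> 0\<close> \<open>r \<noteq> 0\<close> by blast
  ultimately show False using degree_orbit_poly qr(3,4) by linarith
qed

end

text \<open>The coefficients lie in a tower containing all conjugates and are fixed by all of its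
  embeddings, which permute the conjugates.\<close>
lemma coeffs_in_orbit_poly:
  fixes F :: "'a::field set"
  assumes F: "is_subfield F" and two: "(2::'a) \<noteq> 0" and qc: "\<forall>x::'a. \<exists>y. y * y = x"
    and tower: "is_sqrt_tower F rs" and x: "x \<in> sqrt_tower F rs"
  shows "coeffs_in (orbit_poly F rs x) F"
proof -
  let ?C = "conjugates F rs x" and ?K = "sqrt_tower F rs"
  obtain rs' where tower': "is_sqrt_tower F rs'"
    and into: "\<And>t. emb_over F ?K t \<Longrightarrow> t ` ?K \<subseteq> sqrt_tower F rs'"
    using common_sqrt_tower[OF F tower] by blast
  let ?K' = "sqrt_tower F rs'"
  have K': "is_subfield ?K'" and FK': "F \<subseteq> ?K'" and FK: "F \<subseteq> ?K"
    using tower tower' by (simp_all add: F is_subfield_sqrt_tower base_subset_sqrt_tower)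
  have CK': "?C \<subseteq> ?K'" using into x unfolding conjugates_def by blast
  have permute: "p ` ?C = ?C" if p: "emb_over F ?K' p" for p
  proof -
    have "p ` ?C \<subseteq> ?C"
    proof
      fix z assume "z \<in> p ` ?C"
      then obtain t where t: "emb_over F ?K t" "z = (p \<circ> t) x" unfolding conjugates_def by auto
      have "emb_over F ?K (p \<circ> t)" using emb_over_comp[OF t(1) into[OF t(1)] p FK] .
      then show "z \<in> ?C" unfolding t(2) by (rule conjugatesI)
    qed
    moreover have "inj_on p ?C" using inj_on_subset[OF emb_over_inj_on[OF F K' FK' p] CK'] .
    ultimately show ?thesis using finite_conjugates[OF F tower x] by (simp add: endo_inj_surj)
  qed
  have "coeff (orbit_poly F rs x) i \<in> F" for i
  proof (rule mem_base_if_fixed[OF F two qc tower'])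
    show "coeff (orbit_poly F rs x) i \<in> ?K'"
      using coeffs_in_prod_linear[OF K' CK'] unfolding coeffs_in_def orbit_poly_def ..
    fix p assume p: "emb_over F ?K' p"
    have "p (coeff (orbit_poly F rs x) i) = coeff (map_poly p (orbit_poly F rs x)) i"
      by (simp add: coeff_map_poly emb_over_0[OF F K' FK' p])
    also have "\<dots> = coeff (orbit_poly F rs x) i"
      unfolding orbit_poly_def map_poly_emb_over_prod_linear[OF F K' FK' p CK'] permute[OF p] ..
    finally show "p (coeff (orbit_poly F rs x) i) = coeff (orbit_poly F rs x) i" .
  qed
  then show ?thesis unfolding coeffs_in_def ..
qed

lemma poly_square_minus_eq_0_iff: "poly [:- c, 0, 1:] z = 0 \<longleftrightarrow> z * z = (c::'a::comm_ring_1)"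
  by (simp add: algebra_simps flip: diff_eq_eq)

definition root_splitting_in :: "'a::field set \<Rightarrow> 'a set \<Rightarrow> 'a \<Rightarrow> bool" where
  "root_splitting_in F M r \<longleftrightarrow> (\<exists>q. coeffs_in q F \<and> poly q r = 0 \<and> {z. poly q z = 0} \<subseteq> M)"

lemma root_splitting_in_sqrt:
  assumes F: "is_subfield F" and M: "is_subfield M" and rr: "r * r \<in> F" and r: "r \<in> M"
  shows "root_splitting_in F M r"
  unfolding root_splitting_in_def
proof (intro exI conjI)
  show "coeffs_in [:- (r * r), 0, 1:] F" using F rr by (simp add: coeffs_in_0 subfield_closed)
  show "{z. poly [:- (r * r), 0, 1:] z = 0} \<subseteq> M"
    using M r by (auto simp: poly_square_minus_eq_0_iff square_eq_iff subfield_uminus)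
qed (simp add: poly_square_minus_eq_0_iff)

lemma galois_overI_sqrt_towers:
  fixes F M :: "'a::field set"
  assumes F: "is_subfield F" and two: "(2::'a) \<noteq> 0" and qc: "\<forall>x::'a. \<exists>y. y * y = x"
    and M: "is_subfield M" "F \<subseteq> M"
    and towers: "\<And>x. x \<in> M \<Longrightarrow> \<exists>rs. is_sqrt_tower F rs \<and> x \<in> sqrt_tower F rs \<and>
      (\<forall>r\<in>set rs. root_splitting_in F M r)"
  shows "galois_over F M"
  unfolding galois_over_def
proof (intro conjI ballI)
  fix x assume "x \<in> M"
  then obtain rs where tower: "is_sqrt_tower F rs" and x: "x \<in> sqrt_tower F rs"
    and gens: "\<forall>r\<in>set rs. root_splitting_in F M r"
    using towers by blast
  have K: "is_subfield (sqrt_tower F rs)" and FK: "F \<subseteq> sqrt_tower F rs"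
    using tower by (simp_all add: F is_subfield_sqrt_tower base_subset_sqrt_tower)
  have "conjugates F rs x \<subseteq> M"
  proof (rule conjugates_subset[OF F tower x M])
    fix t assume t: "emb_over F (sqrt_tower F rs) t"
    show "t ` set rs \<subseteq> M"
    proof
      fix z assume "z \<in> t ` set rs"
      then obtain r where r: "r \<in> set rs" "z = t r" by blast
      obtain q where q: "coeffs_in q F" "poly q r = 0" "{z. poly q z = 0} \<subseteq> M"
        using gens r(1) unfolding root_splitting_in_def by blast
      have "poly q z = t (poly q r)"
        using emb_over_poly[OF F K FK t q(1)] set_subset_sqrt_tower[OF F tower] r by auto
      then show "z \<in> M" using q emb_over_0[OF F K FK t] by auto
    qed
  qed
  then show "\<exists>p. irreducible_over F p \<and> poly p x = 0 \<and> splits_distinct_in M p"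
    using irreducible_orbit_poly[OF F tower x coeffs_in_orbit_poly[OF F two qc tower x]]
      poly_orbit_poly_self[OF F tower x] orbit_poly_splits[OF F tower x] by blast
qed (use F M in auto)

section \<open>The first two steps of the tower\<close>

lemma is_subfield_tower_Suc: "is_subfield (tower K (Suc n))"
  by (simp add: is_subfield_gen_field)

lemma tower_subset_Suc: "tower K n \<subseteq> tower K (Suc n)"
  using gen_field_upper[of "tower K n \<union> \<Union>{E. quadratic_ext (tower K n) E \<and> galois_over K E}"]
  by simp

lemma tower_Suc_upper: "quadratic_ext (tower K n) E \<Longrightarrow> galois_over K E \<Longrightarrow> E \<subseteq> tower K (Suc n)"
  using gen_field_upper[of "tower K n \<union> \<Union>{E. quadratic_ext (tower K n) E \<and> galois_over K E}"]
  by auto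

lemma tower_Suc_least:
  "is_subfield M \<Longrightarrow> tower K n \<subseteq> M \<Longrightarrow>
    (\<And>E. quadratic_ext (tower K n) E \<Longrightarrow> galois_over K E \<Longrightarrow> E \<subseteq> M) \<Longrightarrow> tower K (Suc n) \<subseteq> M"
  unfolding tower.simps by (rule gen_field_least) auto

lemma tower_Suc_subset_if_sqrts:
  fixes M :: "'a::field set"
  assumes two: "(2::'a) \<noteq> 0" and M: "is_subfield M" and sub: "tower K n \<subseteq> M"
    and sqrts: "\<And>r. r * r \<in> tower K n \<Longrightarrow> r \<in> M"
  shows "tower K (Suc n) \<subseteq> M"
proof (rule tower_Suc_least[OF M sub])
  fix E assume E: "quadratic_ext (tower K n) E"
  show "E \<subseteq> M"
  proof
    fix e assume "e \<in> E"
    then obtain p q r where pqr: "p \<in> tower K n" "q \<in> tower K n" "r * r \<in> tower K n" "e = p + q * r"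
      using quadratic_ext_sqrt_coords[OF E two] by blast
    then have "p \<in> M" "q \<in> M" "r \<in> M" using sub sqrts by auto
    then show "e \<in> M" unfolding pqr(4) by (intro subfield_add[OF M] subfield_mult[OF M])
  qed
qed

lemma sqrt_mem_tower1:
  fixes F :: "'a::field set"
  assumes F: "is_subfield F" and two: "(2::'a) \<noteq> 0" and qc: "\<forall>x::'a. \<exists>y. y * y = x"
    and rr: "r * r \<in> F"
  shows "r \<in> tower F (Suc 0)"
proof (cases "r \<in> F")
  case True
  then show ?thesis using tower_subset_Suc[of F 0] by auto
next
  case False
  let ?E = "adjoin F r"
  have E: "is_subfield ?E" and FE: "F \<subseteq> ?E" and rE: "r \<in> ?E"
    using F rr by (simp_all add: is_subfield_adjoin subset_adjoin mem_adjoin_self)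
  have "galois_over F ?E"
  proof (rule galois_overI_sqrt_towers[OF F two qc E FE])
    fix x assume "x \<in> ?E"
    then show "\<exists>rs. is_sqrt_tower F rs \<and> x \<in> sqrt_tower F rs \<and>
        (\<forall>r\<in>set rs. root_splitting_in F ?E r)"
      using rr root_splitting_in_sqrt[OF F E rr rE] by (intro exI[of _ "[r]"]) simp
  qed
  then have "?E \<subseteq> tower F (Suc 0)" using tower_Suc_upper[of F 0] quadratic_ext_adjoin[OF F rr False]
    by simp
  then show ?thesis using rE by blast
qed

definition multiquadratic :: "'a::field set \<Rightarrow> 'a set" where
  "multiquadratic F = {x. \<exists>rs. (\<forall>r\<in>set rs. r * r \<in> F) \<and> x \<in> sqrt_tower F rs}"

lemma is_subfield_multiquadratic:
  assumes F: "is_subfield F"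
  shows "is_subfield (multiquadratic F)"
proof -
  have common: "\<exists>rs. (\<forall>r\<in>set rs. r * r \<in> F) \<and> x \<in> sqrt_tower F rs \<and> y \<in> sqrt_tower F rs"
    if x: "x \<in> multiquadratic F" and y: "y \<in> multiquadratic F" for x y
  proof -
    obtain xs ys where xs: "\<forall>r\<in>set xs. r * r \<in> F" "x \<in> sqrt_tower F xs"
      and ys: "\<forall>r\<in>set ys. r * r \<in> F" "y \<in> sqrt_tower F ys"
      using x y unfolding multiquadratic_def by blast
    have tower: "is_sqrt_tower F (xs @ ys)"
      using xs(1) ys(1) by (intro is_sqrt_tower_if_squares_in_base[OF F]) auto
    have "sqrt_tower F xs \<subseteq> sqrt_tower F (xs @ ys)" "sqrt_tower F ys \<subseteq> sqrt_tower F (xs @ ys)"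
      by (rule sqrt_tower_mono[OF F tower], simp)+
    then show ?thesis using xs ys by (intro exI[of _ "xs @ ys"]) auto
  qed
  have closed: "is_subfield (sqrt_tower F rs)" if "\<forall>r\<in>set rs. r * r \<in> F" for rs
    using that by (simp add: F is_subfield_sqrt_tower is_sqrt_tower_if_squares_in_base)
  show ?thesis unfolding is_subfield_def
  proof (intro conjI ballI)
    show "0 \<in> multiquadratic F" "1 \<in> multiquadratic F"
      unfolding multiquadratic_def using F
      by (auto intro!: exI[of _ "[]"] simp: subfield_0 subfield_1)
    fix x y assume "x \<in> multiquadratic F" "y \<in> multiquadratic F"
    then obtain rs where "\<forall>r\<in>set rs. r * r \<in> F" "x \<in> sqrt_tower F rs" "y \<in> sqrt_tower F rs"
      using common by blast
    then show "x + y \<in> multiquadratic F" "x * y \<in> multiquadratic F"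
      "- x \<in> multiquadratic F" "inverse x \<in> multiquadratic F"
      unfolding multiquadratic_def using closed by (blast intro: subfield_closed)+
  qed
qed

lemma tower1_subset_multiquadratic:
  fixes F :: "'a::field set"
  assumes F: "is_subfield F" and two: "(2::'a) \<noteq> 0"
  shows "tower F (Suc 0) \<subseteq> multiquadratic F"
proof (rule tower_Suc_subset_if_sqrts[OF two is_subfield_multiquadratic[OF F]])
  show "tower F 0 \<subseteq> multiquadratic F" unfolding multiquadratic_def by (auto intro!: exI[of _ "[]"])
  fix r assume "r * r \<in> tower F 0"
  then show "r \<in> multiquadratic F"
    unfolding multiquadratic_def using F
    by (intro CollectI exI[of _ "[r]"]) (simp add: mem_adjoin_self)
qed

lemma is_sqrt_tower_conjugate_sqrts:
  assumes F: "is_subfield F" and s: "s * s \<in> F" and b: "b0 \<in> F" "b1 \<in> F"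
    and rb: "rb * rb = b0 + b1 * s" and w: "w * w = b0 - b1 * s"
  shows "is_sqrt_tower F [w, rb, s]"
proof -
  have "rb * rb \<in> adjoin F s" unfolding rb by (rule adjoinI[OF b])
  moreover have "w * w \<in> adjoin F s" unfolding w diff_conv_add_uminus minus_mult_left
    by (rule adjoinI[OF b(1) subfield_uminus[OF F b(2)]])
  then have "w * w \<in> adjoin (adjoin F s) rb" using subset_adjoin[OF is_subfield_adjoin[OF F s]]
    by blast
  ultimately show ?thesis using s by simp
qed

lemma root_splitting_in_conjugate_sqrts:
  assumes F: "is_subfield F" and s: "s * s \<in> F" and b: "b0 \<in> F" "b1 \<in> F"
    and rb: "rb * rb = b0 + b1 * s" and w: "w * w = b0 - b1 * s"
    and M: "is_subfield M" "rb \<in> M" "w \<in> M" and y: "y = rb \<or> y = w"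
  shows "root_splitting_in F M y"
proof -
  define q where "q = [:b0 * b0 - b1 * b1 * (s * s), 0, - (2 * b0), 0, 1:]"
  have poly_q: "poly q z = (z * z - rb * rb) * (z * z - w * w)" for z
    unfolding q_def rb w by (simp add: algebra_simps)
  have "coeffs_in q F" unfolding q_def using F b s by (simp add: coeffs_in_0 subfield_closed)
  moreover have "poly q y = 0" using y by (auto simp: poly_q)
  moreover have "{z. poly q z = 0} \<subseteq> M" using M by (auto simp: poly_q square_eq_iff subfield_uminus)
  ultimately show ?thesis unfolding root_splitting_in_def by blast
qed

lemma galois_over_adjoin_sum_of_conjugate_sqrts:
  fixes F :: "'a::field set"
  assumes F: "is_subfield F" and two: "(2::'a) \<noteq> 0" and qc: "\<forall>x::'a. \<exists>y. y * y = x"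
    and s: "s * s \<in> F" and b: "b0 \<in> F" "b1 \<in> F"
    and rb: "rb * rb = b0 + b1 * s" and w: "w * w = b0 - b1 * s" and u: "u = rb + w"
    and uu: "u * u \<in> tower F (Suc 0)" and rbE: "rb \<in> adjoin (tower F (Suc 0)) u"
  shows "galois_over F (adjoin (tower F (Suc 0)) u)"
proof -
  let ?T = "tower F (Suc 0)" and ?E = "adjoin (tower F (Suc 0)) u"
  have T: "is_subfield ?T" by (rule is_subfield_tower_Suc)
  have E: "is_subfield ?E" and TE: "?T \<subseteq> ?E" and uE: "u \<in> ?E"
    using T uu by (simp_all add: is_subfield_adjoin subset_adjoin mem_adjoin_self)
  have FE: "F \<subseteq> ?E" using tower_subset_Suc[of F 0] TE by auto
  have wE: "w \<in> ?E" using subfield_diff[OF E uE rbE] u by simp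
  show ?thesis
  proof (rule galois_overI_sqrt_towers[OF F two qc E FE])
    fix x assume "x \<in> ?E"
    then obtain p q where pq: "p \<in> ?T" "q \<in> ?T" "x = p + q * u" by (rule adjoinE)
    then have "p \<in> multiquadratic F" "q \<in> multiquadratic F"
      using tower1_subset_multiquadratic[OF F two] by auto
    then obtain ps qs where ps: "\<forall>r\<in>set ps. r * r \<in> F" "p \<in> sqrt_tower F ps"
      and qs: "\<forall>r\<in>set qs. r * r \<in> F" "q \<in> sqrt_tower F qs"
      unfolding multiquadratic_def by blast
    let ?rs = "ps @ qs @ [w, rb, s]"
    have "is_sqrt_tower F (ps @ qs)"
      using ps(1) qs(1) by (intro is_sqrt_tower_if_squares_in_base[OF F]) auto
    then have "is_sqrt_tower F ((ps @ qs) @ [w, rb, s])"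
      by (rule is_sqrt_tower_append[OF F _ is_sqrt_tower_conjugate_sqrts[OF F s b rb w]])
    then have tower: "is_sqrt_tower F ?rs" by simp
    have K: "is_subfield (sqrt_tower F ?rs)" by (rule is_subfield_sqrt_tower[OF F tower])
    have "p \<in> sqrt_tower F ?rs" "q \<in> sqrt_tower F ?rs"
      using ps(2) qs(2) sqrt_tower_mono[OF F tower, of ps] sqrt_tower_mono[OF F tower, of qs]
      by auto
    moreover have "rb \<in> sqrt_tower F ?rs" "w \<in> sqrt_tower F ?rs"
      using set_subset_sqrt_tower[OF F tower] by auto
    ultimately have "x \<in> sqrt_tower F ?rs"
      unfolding pq(3) u by (intro subfield_add[OF K] subfield_mult[OF K])
    moreover have "root_splitting_in F ?E r" if r: "r \<in> set ?rs" for r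
    proof -
      consider "r * r \<in> F" | "r = rb \<or> r = w" using r ps(1) qs(1) s by auto
      then show ?thesis
      proof cases
        case 1
        then have "r \<in> ?E" using sqrt_mem_tower1[OF F two qc] TE by blast
        with 1 show ?thesis by (rule root_splitting_in_sqrt[OF F E])
      qed (rule root_splitting_in_conjugate_sqrts[OF F s b rb w E rbE wE])
    qed
    ultimately show "\<exists>rs. is_sqrt_tower F rs \<and> x \<in> sqrt_tower F rs \<and>
        (\<forall>r\<in>set rs. root_splitting_in F ?E r)"
      using tower by (intro exI[of _ ?rs]) simp
  qed
qed

lemma sqrt_with_nonzero_sum:
  fixes rb :: "'a::field"
  assumes two: "(2::'a) \<noteq> 0" and qc: "\<forall>x::'a. \<exists>y. y * y = x" and rb: "rb \<noteq> 0"
  obtains w where "w * w = c" and "rb + w \<noteq> 0"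
proof -
  obtain w where w: "w * w = c" using qc by blast
  show ?thesis
  proof (cases "rb + w = 0")
    case True
    then have "rb + - w = 2 * rb" by (simp add: add_eq_0_iff)
    then have "rb + - w \<noteq> 0" using two rb by simp
    moreover have "- w * - w = c" using w by simp
    ultimately show ?thesis by (rule that[rotated])
  qed (use that w in blast)
qed

lemma sum_of_conjugate_sqrts:
  fixes F :: "'a::field set"
  assumes F: "is_subfield F" and two: "(2::'a) \<noteq> 0" and qc: "\<forall>x::'a. \<exists>y. y * y = x"
    and s: "s * s \<in> F" and b: "b0 \<in> F" "b1 \<in> F"
    and rb: "rb * rb = b0 + b1 * s" and w: "w * w = b0 - b1 * s"
    and u: "u = rb + w" and u0: "u \<noteq> 0"
  shows "u * u \<in> tower F (Suc 0)" and "rb \<in> adjoin (tower F (Suc 0)) u"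
proof -
  let ?T = "tower F (Suc 0)"
  have T: "is_subfield ?T" by (rule is_subfield_tower_Suc)
  have FT: "F \<subseteq> ?T" using tower_subset_Suc[of F 0] by simp
  have "(rb * w) * (rb * w) = (rb * rb) * (w * w)" by (simp add: ac_simps)
  also have "\<dots> = b0 * b0 - b1 * b1 * (s * s)" unfolding rb w by (simp add: algebra_simps)
  finally have "rb * w \<in> ?T" using F b s
    by (intro sqrt_mem_tower1[OF F two qc]) (simp add: subfield_closed)
  moreover have "u * u = 2 * b0 + 2 * (rb * w)" unfolding u using rb w by (simp add: algebra_simps)
  ultimately show uu: "u * u \<in> ?T" using T FT b by (simp add: subset_iff subfield_closed)
  have E: "is_subfield (adjoin ?T u)" and TE: "?T \<subseteq> adjoin ?T u" and uE: "u \<in> adjoin ?T u"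
    using T uu by (simp_all add: is_subfield_adjoin subset_adjoin mem_adjoin_self)
  have "(rb - w) * u = 2 * b1 * s" unfolding u using rb w by (simp add: algebra_simps)
  then have "rb - w = 2 * b1 * s / u" using u0 by (simp add: eq_divide_eq)
  then have "u + 2 * b1 * s / u = 2 * rb" unfolding u by (simp add: algebra_simps mult_2)
  then have rb_eq: "rb = (u + 2 * b1 * s / u) / 2" using two
    by (simp add: eq_divide_eq mult.commute)
  have "2 * b1 * s \<in> adjoin ?T u"
    using TE FT b sqrt_mem_tower1[OF F two qc s] T by (simp add: subset_iff subfield_closed)
  then show "rb \<in> adjoin ?T u" unfolding rb_eq
    by (intro subfield_divide[OF E] subfield_add[OF E] subfield_2[OF E] uE)
qed

lemma sqrt_mem_tower2:
  fixes F :: "'a::field set"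
  assumes F: "is_subfield F" and two: "(2::'a) \<noteq> 0" and qc: "\<forall>x::'a. \<exists>y. y * y = x"
    and s: "s * s \<in> F" and beta: "\<beta> \<in> adjoin F s" and rb: "rb * rb = \<beta>"
  shows "rb \<in> tower F 2"
proof -
  let ?T = "tower F (Suc 0)"
  have T2: "is_subfield (tower F 2)" and TT2: "?T \<subseteq> tower F 2"
    unfolding numeral_2_eq_2 by (rule is_subfield_tower_Suc, rule tower_subset_Suc)
  obtain b0 b1 where b: "b0 \<in> F" "b1 \<in> F" and rb': "rb * rb = b0 + b1 * s"
    using beta rb by (auto elim: adjoinE)
  show ?thesis
  proof (cases "rb = 0")
    case True
    then show ?thesis using subfield_0[OF T2] by simp
  next
    case False
    then obtain w where w: "w * w = b0 - b1 * s" and u0: "rb + w \<noteq> 0"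
      using sqrt_with_nonzero_sum[OF two qc] by blast
    note uu = sum_of_conjugate_sqrts(1)[OF F two qc s b rb' w refl u0]
      and rbE = sum_of_conjugate_sqrts(2)[OF F two qc s b rb' w refl u0]
    have "adjoin ?T (rb + w) \<subseteq> tower F 2"
    proof (cases "rb + w \<in> ?T")
      case True
      show ?thesis unfolding adjoin_eq_self[OF is_subfield_tower_Suc True] by (rule TT2)
    next
      case False
      then show ?thesis
        using tower_Suc_upper[of F "Suc 0"] quadratic_ext_adjoin[OF is_subfield_tower_Suc uu False]
          galois_over_adjoin_sum_of_conjugate_sqrts[OF F two qc s b rb' w refl uu rbE]
        by (simp add: numeral_2_eq_2)
    qed
    then show ?thesis using rbE by blast
  qed
qed

theorem lemma1:
  fixes F :: "'a::field set" and a s :: 'a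
  assumes "is_subfield F"
    and "(2::'a) \<noteq> 0"
    and "is_quadratic_closure_of F"
    and "a \<in> F" and "a \<noteq> 0"
    and "\<not> (\<exists>b\<in>F. b * b = a)"
    and "s * s = a"
  shows "Kup (gen_field (F \<union> {s})) 2 \<subseteq> Kup F 3"
proof -
  note F = assms(1) and two = assms(2)
  have qc: "\<forall>x::'a. \<exists>y. y * y = x"
    using assms(3) unfolding is_quadratic_closure_of_def quadratically_closed_def by blast
  have s: "s * s \<in> F" using assms(4,7) by simp
  let ?L = "gen_field (F \<union> {s})"
  have T2: "is_subfield (tower F 2)" unfolding numeral_2_eq_2 by (rule is_subfield_tower_Suc)
  have L_adjoin: "?L \<subseteq> adjoin F s"
    using F s
    by (intro gen_field_least) (simp_all add: is_subfield_adjoin subset_adjoin mem_adjoin_self)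
  have "?L \<subseteq> tower F 2"
    using tower_subset_Suc[of F 0] tower_subset_Suc[of F 1] sqrt_mem_tower1[OF F two qc s]
    by (intro gen_field_least[OF T2]) (auto simp: numeral_2_eq_2)
  then have "tower ?L (Suc 0) \<subseteq> tower F 2"
    using sqrt_mem_tower2[OF F two qc s] L_adjoin
    by (intro tower_Suc_subset_if_sqrts[OF two T2]) auto
  then show ?thesis unfolding Kup_def by simp
qed

end
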